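(* Let $F$, $H$, $X$, $\Omega$, $Q$ and the sequences generated by the IneIREG method be as described in the context, and suppose $H$ is $\mu$-strongly monotone for some $\mu>0$. Suppose $\eta_k\equiv\eta>0$; $\lambda_k\in[\underline\lambda,\overline\lambda]$ for all $k\ge0$ with $0<\underline\lambda\le\overline\lambda<1/L$, $L:=L_F+\eta L_H$; and $\alpha_0\in[0,1]$ and $\alpha_{k+1}\le(1-\beta_k)\alpha_k$ for all $k\ge0$, where $\beta_k:=\big(\frac{1}{1-\lambda_k^2L^2}+\frac{1}{2\lambda_k\eta\mu}\big)^{-1}$. Define $p_{-1}:=1$, $p_k:=\big(\prod_{i=0}^k(1-\beta_i)\big)^{-1}$ for $k\ge0$, for $k\ge1$ $\Lambda_k:=\sum_{j=0}^{k-1}\lambda_j\eta p_j$ and $\overline y_k:=\Lambda_k^{-1}\sum_{j=0}^{k-1}\lambda_j\eta p_jy_j$, and $\beta:=\big(\frac{1}{1-\overline\lambda^2L^2}+\frac{1}{2\underline\lambda\eta\mu}\big)^{-1}\in(0,1)$. Then for all $k\ge1$, $$-B_H\,\mathrm{dist}(\overline y_k,Q)\le\mathrm{Gap}(\overline y_k,H,Q)\le\frac{(1-\beta)^k}{2\underline\lambda\eta}\Big(D_X^2+\sum_{j=0}^{k-1}p_{j-1}\delta_j\Big).$$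
   Context: Work in $\mathbb{R}^n$ with Euclidean inner product $\langle\cdot,\cdot\rangle$ and norm $\|\cdot\|$. The maps $F\colon \mathrm{Dom}\,F\to\mathbb{R}^n$ and $H\colon\mathrm{Dom}\,H\to\mathbb{R}^n$ are monotone and Lipschitz continuous with constants $L_F>0$ and $L_H>0$; $H$ is $\mu$-strongly monotone means $\langle H(x)-H(y),x-y\rangle\ge\mu\|x-y\|^2$ for all $x,y\in\mathrm{Dom}\,H$. $X$ is a nonempty compact convex set and $\Omega$ a nonempty closed convex set with $X\subset\Omega\subset\mathrm{Dom}\,F\cap\mathrm{Dom}\,H$; $P_X,P_\Omega$ denote orthogonal projections. $Q:=\{x\in X:\langle F(x),y-x\rangle\ge0\ \forall y\in X\}$ is assumed nonempty. $D_X:=\sup_{x,y\in X}\|x-y\|$, $B_H:=\sup_{x\in Q}\|H(x)\|$, $\mathrm{dist}(y,Q)$ is the Euclidean distance to $Q$. $\mathrm{Gap}(z,H,Q):=\sup_{x\in Q}\langle H(x),z-x\rangle$. IneIREG method: start with $x_0=x_{-1}\in X$; for $k=0,1,\dots$, with parameters $\alpha_k\ge0$, $\lambda_k>0$, $\eta_k>0$, set $w_k=x_k+\alpha_k(x_k-x_{k-1})$, $w'_k=P_\Omega(w_k)$, $y_k=P_X\big(w_k-\lambda_k(F(w'_k)+\eta_kH(w'_k))\big)$, $x_{k+1}=P_X\big(w_k-\lambda_k(F(y_k)+\eta_kH(y_k))\big)$. Also $\delta_k:=\alpha_k(1+\alpha_k)\|x_k-x_{k-1}\|^2$ for $k\ge0$.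 *)

theory Defs
  imports "HOL-Analysis.Analysis"
begin

definition monotone_op :: "('a::real_inner \<Rightarrow> 'a) \<Rightarrow> 'a set \<Rightarrow> bool" where
  "monotone_op F S \<longleftrightarrow> (\<forall>x\<in>S. \<forall>y\<in>S. inner (F x - F y) (x - y) \<ge> 0)"

definition strongly_monotone_op :: "real \<Rightarrow> ('a::real_inner \<Rightarrow> 'a) \<Rightarrow> 'a set \<Rightarrow> bool" where
  "strongly_monotone_op \<mu> H S \<longleftrightarrow>
     (\<forall>x\<in>S. \<forall>y\<in>S. inner (H x - H y) (x - y) \<ge> \<mu> * (norm (x - y))\<^sup>2)"

definition VI_sol :: "('a::real_inner \<Rightarrow> 'a) \<Rightarrow> 'a set \<Rightarrow> 'a set" where
  "VI_sol F X = {x \<in> X. \<forall>y\<in>X. inner (F x) (y - x) \<ge> 0}"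

definition Gap :: "'a::real_inner \<Rightarrow> ('a \<Rightarrow> 'a) \<Rightarrow> 'a set \<Rightarrow> real" where
  "Gap z H Q = (SUP x\<in>Q. inner (H x) (z - x))"

end

theory Submission
  imports Defs
begin

(* For a solution z of VI(F, X), F + \<eta>H is \<eta>\<mu>-strongly monotone towards z up to the term
   \<eta><H z, v - z>. One extragradient step therefore contracts the distance to z:
   |x(k+1) - z|^2 <= (1 - \<beta>_k) |w_k - z|^2 - 2 \<lambda>_k \<eta> <H z, y_k - z>, where \<beta>_k is the harmonic
   combination of the Lipschitz margin 1 - \<lambda>_k^2 L^2 and the strong monotonicity gain 2 \<lambda>_k \<eta> \<mu>.
   Expanding |w_k - z|^2 at the inertial point and dividing by the products of the (1 - \<beta>_i) gives a
   telescoping inequality for a Lyapunov function, in which the condition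
   \<alpha>_(k+1) <= (1 - \<beta>_k) \<alpha>_k keeps the inertial terms under control. This bounds the p_j-weighted sum of
   <H z, y_j - z> uniformly in z \<in> Q, and averaging gives the upper Gap estimate, since the total
   weight grows like (1 - \<beta>)^(-k). The lower estimate is Cauchy-Schwarz at the point of Q nearest
   to the average. *)

lemma projection_extragradient_estimate:
  fixes w y xn z gy gw :: "'a::real_inner" and lam L :: real
  assumes proj_xn: "inner (w - lam *\<^sub>R gy - xn) (z - xn) \<le> 0"
    and proj_y: "inner (w - lam *\<^sub>R gw - y) (xn - y) \<le> 0"
    and lip: "norm (gy - gw) \<le> L * norm (y - w)"
    and "lam > 0" "L \<ge> 0"
  shows "(norm (xn - z))\<^sup>2 \<le> (norm (w - z))\<^sup>2 - (1 - lam\<^sup>2 * L\<^sup>2) * (norm (w - y))\<^sup>2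
           + 2 * lam * inner gy (z - y)"
proof -
  have "inner (gy - gw) (y - xn) \<le> norm (gy - gw) * norm (y - xn)"
    by (simp add: norm_cauchy_schwarz)
  also have "\<dots> \<le> L * norm (w - y) * norm (y - xn)"
    using lip by (simp add: mult_right_mono norm_minus_commute)
  finally have cs: "2 * lam * inner (gy - gw) (y - xn) \<le> 2 * lam * (L * norm (w - y) * norm (y - xn))"
    using \<open>lam > 0\<close> by simp
  \<comment> \<open>Young's inequality absorbs the Lipschitz error into the two squared step lengths\<close>
  have young: "2 * lam * (L * norm (w - y) * norm (y - xn)) \<le> lam\<^sup>2 * L\<^sup>2 * (norm (w - y))\<^sup>2 + (norm (y - xn))\<^sup>2"
    using sum_squares_ge_zero[of 0 "lam * L * norm (w - y) - norm (y - xn)"]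
    by (simp add: power2_eq_square algebra_simps)
  have expand: "(norm (xn - z))\<^sup>2 = (norm (w - z))\<^sup>2 - (norm (w - y))\<^sup>2 - (norm (y - xn))\<^sup>2
      - 2 * inner (w - y) (y - xn) + 2 * inner (xn - w) (xn - z)"
    by (simp add: power2_norm_eq_inner inner_diff_left inner_diff_right inner_commute)
  show ?thesis
    using proj_xn proj_y cs young \<open>lam > 0\<close> unfolding expand
    by (simp add: inner_diff_left inner_diff_right inner_commute algebra_simps)
qed

lemma norm_add_sq_le_weighted:
  fixes u v :: "'a::real_normed_vector"
  assumes "c1 > 0" "c2 > 0"
  shows "inverse (1 / c1 + 1 / c2) * (norm (u + v))\<^sup>2 \<le> c1 * (norm u)\<^sup>2 + c2 * (norm v)\<^sup>2"
proof -
  have weight: "inverse (1 / c1 + 1 / c2) = c1 * c2 / (c1 + c2)"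
    using assms by (simp add: field_simps)
  have "inverse (1 / c1 + 1 / c2) * (norm (u + v))\<^sup>2 \<le> c1 * c2 / (c1 + c2) * (norm u + norm v)\<^sup>2"
    unfolding weight using assms by (intro mult_left_mono power_mono norm_triangle_ineq) auto
  also have "\<dots> \<le> c1 * (norm u)\<^sup>2 + c2 * (norm v)\<^sup>2"
  proof -
    have "c1 * c2 * (norm u + norm v)\<^sup>2 \<le> (c1 * (norm u)\<^sup>2 + c2 * (norm v)\<^sup>2) * (c1 + c2)"
      using sum_squares_ge_zero[of 0 "c1 * norm u - c2 * norm v"]
      by (simp add: power2_eq_square algebra_simps)
    then show ?thesis
      using assms by (simp add: pos_divide_le_eq)
  qed
  finally show ?thesis .
qed

lemma power2_norm_extrapolation:
  fixes x x' z :: "'a::real_inner" and a :: real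
  shows "(norm (x + a *\<^sub>R (x - x') - z))\<^sup>2 = (1 + a) * (norm (x - z))\<^sup>2 - a * (norm (x' - z))\<^sup>2
          + a * (1 + a) * (norm (x - x'))\<^sup>2"
  by (simp add: power2_norm_eq_inner inner_diff_left inner_diff_right inner_add_left inner_add_right
      inner_commute algebra_simps)

lemma regularized_operator_inner_ge:
  fixes F H :: "'a::real_inner \<Rightarrow> 'a"
  assumes "monotone_op F DF" "strongly_monotone_op \<mu> H DH" "X \<subseteq> DF \<inter> DH" "\<eta> \<ge> 0"
    and z: "z \<in> VI_sol F X" and v: "v \<in> X"
  shows "\<eta> * \<mu> * (norm (v - z))\<^sup>2 + \<eta> * inner (H z) (v - z) \<le> inner (F v + \<eta> *\<^sub>R H v) (v - z)"
proof -
  have "z \<in> X" "0 \<le> inner (F z) (v - z)"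
    using z v unfolding VI_sol_def by auto
  moreover have "0 \<le> inner (F v - F z) (v - z)" "\<mu> * (norm (v - z))\<^sup>2 \<le> inner (H v - H z) (v - z)"
    using assms \<open>z \<in> X\<close> unfolding monotone_op_def strongly_monotone_op_def by blast+
  ultimately show ?thesis
    using mult_left_mono[OF \<open>\<mu> * _ \<le> _\<close> \<open>\<eta> \<ge> 0\<close>]
    by (simp add: inner_add_left inner_diff_left algebra_simps)
qed

lemma one_minus_square_mult_pos:
  fixes l L :: real
  assumes "0 \<le> l" "0 \<le> L" "l * L < 1"
  shows "0 < 1 - l\<^sup>2 * L\<^sup>2"
proof -
  have "(l * L)\<^sup>2 < 1"
    using assms by (simp add: abs_square_less_1)
  then show ?thesis
    by (simp add: power_mult_distrib)
qed

lemma extragradient_step_contraction: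
  fixes G :: "'a::euclidean_space \<Rightarrow> 'a" and s :: "'a \<Rightarrow> real"
  assumes X: "closed X" "convex X" "X \<noteq> {}" and \<Omega>: "closed \<Omega>" "convex \<Omega>" "X \<subseteq> \<Omega>"
    and G_lip: "L-lipschitz_on \<Omega> G"
    and G_at_z: "\<And>v. v \<in> X \<Longrightarrow> m * (norm (v - z))\<^sup>2 + s v \<le> inner (G v) (v - z)"
    and "z \<in> X" "lam > 0" "lam * L < 1" "m > 0"
    and w': "w' = closest_point \<Omega> w"
    and y: "y = closest_point X (w - lam *\<^sub>R G w')"
    and xn: "xn = closest_point X (w - lam *\<^sub>R G y)"
  shows "(norm (xn - z))\<^sup>2 \<le> (1 - inverse (1 / (1 - lam\<^sup>2 * L\<^sup>2) + 1 / (2 * lam * m)))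
            * (norm (w - z))\<^sup>2 - 2 * lam * s y"
proof -
  have "L \<ge> 0" using G_lip lipschitz_on_nonneg by blast
  have "y \<in> X" "xn \<in> X" "w' \<in> \<Omega>"
    using closest_point_in_set X \<Omega> y xn w' by blast+
  have "norm (G y - G w') \<le> L * norm (y - w')"
    using lipschitz_onD[OF G_lip] \<open>y \<in> X\<close> \<open>w' \<in> \<Omega>\<close> \<open>X \<subseteq> \<Omega>\<close> by (auto simp: dist_norm)
  also have "\<dots> \<le> L * norm (y - w)"
  proof -
    have "y \<in> \<Omega>" using \<open>y \<in> X\<close> \<open>X \<subseteq> \<Omega>\<close> by blast
    then have "norm (y - w') \<le> norm (y - w)"
      using closest_point_lipschitz[OF \<Omega>(2,1), of y w] closest_point_self[of y \<Omega>]
      by (auto simp: w' dist_norm)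
    then show ?thesis using \<open>L \<ge> 0\<close> by (rule mult_left_mono)
  qed
  finally have lip: "norm (G y - G w') \<le> L * norm (y - w)" .
  have main: "(norm (xn - z))\<^sup>2 \<le> (norm (w - z))\<^sup>2 - (1 - lam\<^sup>2 * L\<^sup>2) * (norm (w - y))\<^sup>2
      + 2 * lam * inner (G y) (z - y)"
    by (rule projection_extragradient_estimate[OF _ _ lip \<open>lam > 0\<close> \<open>L \<ge> 0\<close>])
      (use closest_point_dot[OF X(2,1)] \<open>z \<in> X\<close> \<open>xn \<in> X\<close> xn y in auto)
  have "2 * lam * inner (G y) (z - y) \<le> 2 * lam * (- m * (norm (y - z))\<^sup>2 - s y)"
    using G_at_z[OF \<open>y \<in> X\<close>] \<open>lam > 0\<close>
    by (intro mult_left_mono) (auto simp: inner_diff_right inner_minus_right)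
  moreover have "0 < 1 - lam\<^sup>2 * L\<^sup>2"
    using \<open>lam > 0\<close> \<open>L \<ge> 0\<close> \<open>lam * L < 1\<close> by (intro one_minus_square_mult_pos) auto
  then have "inverse (1 / (1 - lam\<^sup>2 * L\<^sup>2) + 1 / (2 * lam * m)) * (norm (w - z))\<^sup>2
      \<le> (1 - lam\<^sup>2 * L\<^sup>2) * (norm (w - y))\<^sup>2 + 2 * lam * m * (norm (y - z))\<^sup>2"
    using norm_add_sq_le_weighted[of _ "2 * lam * m" "w - y" "y - z"] \<open>lam > 0\<close> \<open>m > 0\<close> by simp
  ultimately show ?thesis
    using main by (simp add: algebra_simps)
qed

lemma extragradient_rate_bounds:
  fixes l1 l2 L \<eta> \<mu> :: real
  assumes "0 < l1" "l1 * L < 1" "L \<ge> 0" "0 < l2" "0 < \<eta>" "0 < \<mu>"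
  shows "0 < inverse (1 / (1 - l1\<^sup>2 * L\<^sup>2) + 1 / (2 * l2 * \<eta> * \<mu>))"
    and "inverse (1 / (1 - l1\<^sup>2 * L\<^sup>2) + 1 / (2 * l2 * \<eta> * \<mu>)) < 1"
proof -
  have "0 < 1 - l1\<^sup>2 * L\<^sup>2" "1 - l1\<^sup>2 * L\<^sup>2 \<le> 1"
    using assms one_minus_square_mult_pos[of l1 L] by auto
  then have "1 < 1 / (1 - l1\<^sup>2 * L\<^sup>2) + 1 / (2 * l2 * \<eta> * \<mu>)"
    using assms by (smt (verit) divide_pos_pos le_divide_eq_1_pos mult_pos_pos)
  then show "0 < inverse (1 / (1 - l1\<^sup>2 * L\<^sup>2) + 1 / (2 * l2 * \<eta> * \<mu>))"
    and "inverse (1 / (1 - l1\<^sup>2 * L\<^sup>2) + 1 / (2 * l2 * \<eta> * \<mu>)) < 1"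
    by (simp_all add: inverse_less_1_iff)
qed

lemma extragradient_rate_mono:
  fixes l lo hi L \<eta> \<mu> :: real
  assumes "0 < lo" "lo \<le> l" "l \<le> hi" "hi * L < 1" "L \<ge> 0" "0 < \<eta>" "0 < \<mu>"
  shows "inverse (1 / (1 - hi\<^sup>2 * L\<^sup>2) + 1 / (2 * lo * \<eta> * \<mu>))
         \<le> inverse (1 / (1 - l\<^sup>2 * L\<^sup>2) + 1 / (2 * l * \<eta> * \<mu>))"
proof -
  have "0 < 1 - hi\<^sup>2 * L\<^sup>2"
    using assms by (intro one_minus_square_mult_pos) auto
  moreover have "l\<^sup>2 * L\<^sup>2 \<le> hi\<^sup>2 * L\<^sup>2"
    using assms by (intro mult_right_mono power_mono) auto
  ultimately have "1 / (1 - l\<^sup>2 * L\<^sup>2) \<le> 1 / (1 - hi\<^sup>2 * L\<^sup>2)"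
    by (intro divide_left_mono) auto
  moreover have "1 / (2 * l * \<eta> * \<mu>) \<le> 1 / (2 * lo * \<eta> * \<mu>)"
    using assms by (intro divide_left_mono) auto
  moreover have "0 < 1 / (1 - l\<^sup>2 * L\<^sup>2) + 1 / (2 * l * \<eta> * \<mu>)"
    using extragradient_rate_bounds(1)[of l L l \<eta> \<mu>] assms mult_right_mono[of l hi L] by force
  ultimately show ?thesis by (intro le_imp_inverse_le) auto
qed

lemma extragradient_rate_uniform_bounds:
  fixes l lo hi L \<eta> \<mu> :: real
  assumes "lo \<le> l" "l \<le> hi" "0 < lo" "hi < 1 / L" "0 < L" "0 < \<eta>" "0 < \<mu>"
  defines "r l1 l2 \<equiv> inverse (1 / (1 - l1\<^sup>2 * L\<^sup>2) + 1 / (2 * l2 * \<eta> * \<mu>))"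
  shows "0 < r hi lo" "r hi lo < 1" "r hi lo \<le> r l l" "r l l < 1" "0 < l" "l * L < 1"
proof -
  have "hi * L < 1"
    using assms by (simp add: pos_less_divide_eq)
  moreover show "0 < l"
    using assms by linarith
  moreover show "l * L < 1"
    using assms \<open>hi * L < 1\<close> by (smt (verit) mult_right_mono)
  ultimately show "0 < r hi lo" "r hi lo < 1" "r hi lo \<le> r l l" "r l l < 1"
    unfolding r_def
    using extragradient_rate_bounds[of hi L lo \<eta> \<mu>] extragradient_rate_bounds[of l L l \<eta> \<mu>]
      extragradient_rate_mono[of lo l hi L \<eta> \<mu>] assms(1-7)
    by (auto simp: less_imp_le)
qed

lemma inertial_recursion_weighted_sum_le:
  fixes \<phi> \<alpha> \<beta> \<delta> c :: "nat \<Rightarrow> real" and R :: real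
  assumes \<phi>_nonneg: "\<And>k. 0 \<le> \<phi> k" and \<phi>_le: "\<And>k. \<phi> k \<le> R"
    and \<beta>_lt: "\<And>k. \<beta> k < 1"
    and \<alpha>_nonneg: "\<And>k. 0 \<le> \<alpha> k" and \<alpha>0: "\<alpha> 0 \<le> 1"
    and \<alpha>_dec: "\<And>k. \<alpha> (Suc k) \<le> (1 - \<beta> k) * \<alpha> k"
    and step: "\<And>k. \<phi> (Suc k) \<le> (1 - \<beta> k) * ((1 + \<alpha> k) * \<phi> k - \<alpha> k * \<phi> (k - 1) + \<delta> k) - c k"
  shows "(\<Sum>k<K. inverse (\<Prod>i\<le>k. 1 - \<beta> i) * c k) \<le> R + (\<Sum>k<K. inverse (\<Prod>i<k. 1 - \<beta> i) * \<delta> k)"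
proof -
  define P where "P k = (\<Prod>i<k. 1 - \<beta> i)" for k
  have P_pos: "0 < P k" for k
    unfolding P_def using \<beta>_lt by (simp add: prod_pos)
  have P_Suc: "P (Suc k) = (1 - \<beta> k) * P k" for k
    unfolding P_def by simp
  \<comment> \<open>The extra term \<alpha> k * (R - \<phi> (k - 1)) is nonnegative and, as \<alpha> k / P k is nonincreasing,
      absorbs the inertial terms of the recursion.\<close>
  define V where "V k = (\<phi> k + \<alpha> k * (R - \<phi> (k - 1))) / P k" for k
  have V_Suc: "V (Suc k) \<le> V k + \<delta> k / P k - c k / P (Suc k)" for k
  proof -
    have "\<phi> (Suc k) / P (Suc k)
        \<le> ((1 - \<beta> k) * ((1 + \<alpha> k) * \<phi> k - \<alpha> k * \<phi> (k - 1) + \<delta> k) - c k) / P (Suc k)"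
      using step[of k] P_pos[of "Suc k"] by (simp add: divide_right_mono)
    also have "\<dots> = ((1 + \<alpha> k) * \<phi> k - \<alpha> k * \<phi> (k - 1) + \<delta> k) / P k - c k / P (Suc k)"
      using \<beta>_lt[of k] by (simp add: P_Suc diff_divide_distrib)
    finally have \<phi>_Suc: "\<phi> (Suc k) / P (Suc k) \<le> \<dots>" .
    have "\<alpha> (Suc k) / P (Suc k) \<le> \<alpha> k / P k"
      using \<alpha>_dec[of k] \<beta>_lt[of k] P_pos[of k] by (simp add: P_Suc divide_simps mult.commute)
    then have "\<alpha> (Suc k) / P (Suc k) * (R - \<phi> k) \<le> \<alpha> k / P k * (R - \<phi> k)"
      using \<phi>_le[of k] by (intro mult_right_mono) auto
    with \<phi>_Suc show ?thesis
      unfolding V_def by (simp add: add_divide_distrib diff_divide_distrib algebra_simps)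
  qed
  have V_bound: "V K + (\<Sum>k<K. c k / P (Suc k)) \<le> R + (\<Sum>k<K. \<delta> k / P k)" for K
  proof (induction K)
    case 0
    have "(1 - \<alpha> 0) * \<phi> 0 \<le> (1 - \<alpha> 0) * R"
      using \<alpha>0 \<phi>_le[of 0] by (intro mult_left_mono) auto
    then show ?case
      by (simp add: V_def P_def algebra_simps)
  next
    case (Suc K)
    then show ?case using V_Suc[of K] by simp
  qed
  have "0 \<le> V K"
    unfolding V_def using P_pos[of K] \<phi>_nonneg[of K] \<alpha>_nonneg[of K] \<phi>_le[of "K - 1"] by simp
  moreover have "inverse (\<Prod>i\<le>k. 1 - \<beta> i) * c k = c k / P (Suc k)" for k
    by (simp add: P_def lessThan_Suc_atMost field_simps)
  moreover have "inverse (\<Prod>i<k. 1 - \<beta> i) * \<delta> k = \<delta> k / P k" for k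
    by (simp add: P_def field_simps)
  ultimately show ?thesis
    using V_bound[of K] by simp
qed

lemma IneIREG_weighted_gap_sum_le:
  fixes F H :: "'a::euclidean_space \<Rightarrow> 'a" and x w w' y :: "nat \<Rightarrow> 'a"
    and \<alpha> \<beta> lam :: "nat \<Rightarrow> real"
  assumes F_mono: "monotone_op F DF" and F_lip: "LF-lipschitz_on DF F"
    and H_strong: "strongly_monotone_op \<mu> H DH" and H_lip: "LH-lipschitz_on DH H"
    and X: "compact X" "convex X" "X \<noteq> {}" and \<Omega>: "closed \<Omega>" "convex \<Omega>"
    and X_sub: "X \<subseteq> \<Omega>" and \<Omega>_sub: "\<Omega> \<subseteq> DF \<inter> DH"
    and z: "z \<in> VI_sol F X" and "0 < \<eta>" "0 < \<mu>"
    and lam: "\<And>k. 0 < lam k" "\<And>k. lam k * (LF + \<eta> * LH) < 1"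
    and \<beta>: "\<And>k. \<beta> k = inverse (1 / (1 - (lam k)\<^sup>2 * (LF + \<eta> * LH)\<^sup>2) + 1 / (2 * lam k * \<eta> * \<mu>))"
    and \<alpha>_nonneg: "\<And>k. 0 \<le> \<alpha> k" and \<alpha>0: "\<alpha> 0 \<le> 1"
    and \<alpha>_dec: "\<And>k. \<alpha> (Suc k) \<le> (1 - \<beta> k) * \<alpha> k"
    and x0: "x 0 \<in> X"
    and w: "\<And>k. w k = x k + \<alpha> k *\<^sub>R (x k - x (k - 1))"
    and w': "\<And>k. w' k = closest_point \<Omega> (w k)"
    and y: "\<And>k. y k = closest_point X (w k - lam k *\<^sub>R (F (w' k) + \<eta> *\<^sub>R H (w' k)))"
    and x_Suc: "\<And>k. x (Suc k) = closest_point X (w k - lam k *\<^sub>R (F (y k) + \<eta> *\<^sub>R H (y k)))"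
  shows "(\<Sum>k<K. (lam k * \<eta> * inverse (\<Prod>i\<le>k. 1 - \<beta> i)) * inner (H z) (y k - z))
    \<le> ((diameter X)\<^sup>2
        + (\<Sum>k<K. inverse (\<Prod>i<k. 1 - \<beta> i) * (\<alpha> k * (1 + \<alpha> k) * (norm (x k - x (k - 1)))\<^sup>2))) / 2"
proof -
  define L where "L = LF + \<eta> * LH"
  define G where "G v = F v + \<eta> *\<^sub>R H v" for v
  define \<phi> where "\<phi> k = (norm (x k - z))\<^sup>2" for k
  have "closed X" "bounded X" using X compact_imp_closed compact_imp_bounded by auto
  have "z \<in> X" using z unfolding VI_sol_def by blast
  have x_in_X: "x k \<in> X" for k
    using x0 closest_point_in_set[OF \<open>closed X\<close> \<open>X \<noteq> {}\<close>] by (cases k) (auto simp: x_Suc)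
  have G_lip: "L-lipschitz_on \<Omega> G"
    unfolding G_def L_def using \<Omega>_sub \<open>0 < \<eta>\<close>
    by (intro lipschitz_on_add lipschitz_on_cmult_nonneg lipschitz_on_subset[OF F_lip]
        lipschitz_on_subset[OF H_lip]) auto
  have G_at_z: "\<eta> * \<mu> * (norm (v - z))\<^sup>2 + \<eta> * inner (H z) (v - z) \<le> inner (G v) (v - z)" if "v \<in> X" for v
    unfolding G_def using X_sub \<Omega>_sub \<open>0 < \<eta>\<close>
    by (intro regularized_operator_inner_ge[OF F_mono H_strong _ _ z that]) auto
  have step: "\<phi> (Suc k) \<le> (1 - \<beta> k) * ((1 + \<alpha> k) * \<phi> k - \<alpha> k * \<phi> (k - 1)
      + \<alpha> k * (1 + \<alpha> k) * (norm (x k - x (k - 1)))\<^sup>2) - 2 * lam k * \<eta> * inner (H z) (y k - z)" for k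
    using extragradient_step_contraction[OF \<open>closed X\<close> X(2,3) \<Omega> X_sub G_lip G_at_z \<open>z \<in> X\<close>
        lam(1)[of k] lam(2)[of k, folded L_def] _ w'[of k] y[of k, folded G_def] x_Suc[of k, folded G_def]]
      \<open>0 < \<eta>\<close> \<open>0 < \<mu>\<close>
    by (simp add: \<phi>_def \<beta> L_def w power2_norm_extrapolation mult.assoc)
  have "L \<ge> 0"
    using G_lip lipschitz_on_nonneg by blast
  then have \<beta>_lt: "\<beta> k < 1" for k
    using extragradient_rate_bounds(2)[OF lam(1) lam(2)[folded L_def] _ lam(1) \<open>0 < \<eta>\<close> \<open>0 < \<mu>\<close>]
    by (simp add: \<beta> L_def)
  have \<phi>_le: "\<phi> k \<le> (diameter X)\<^sup>2" for k
    unfolding \<phi>_def using diameter_bounded_bound[OF \<open>bounded X\<close> x_in_X \<open>z \<in> X\<close>]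
    by (simp add: dist_norm power_mono)
  from inertial_recursion_weighted_sum_le[where c = "\<lambda>k. 2 * lam k * \<eta> * inner (H z) (y k - z)",
      OF _ \<phi>_le \<beta>_lt \<alpha>_nonneg \<alpha>0 \<alpha>_dec step]
  show ?thesis
    by (simp add: \<phi>_def sum_distrib_left algebra_simps)
qed

lemma compact_VI_sol:
  assumes "compact X" "continuous_on X F"
  shows "compact (VI_sol F X)"
proof -
  have "VI_sol F X = X \<inter> (\<Inter>v\<in>X. {u \<in> X. 0 \<le> inner (F u) (v - u)})"
    unfolding VI_sol_def by auto
  moreover have "closed {u \<in> X. 0 \<le> inner (F u) (v - u)}" for v
    using assms by (intro continuous_on_closed_Collect_le continuous_intros compact_imp_closed)
  ultimately show ?thesis
    using assms(1) by (simp add: compact_Int_closed closed_INT)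
qed

lemma Gap_ge_neg_infdist:
  fixes H :: "'a::euclidean_space \<Rightarrow> 'a"
  assumes "compact Q" "Q \<noteq> {}" "continuous_on Q H"
  shows "- (SUP q\<in>Q. norm (H q)) * infdist v Q \<le> Gap v H Q"
proof -
  obtain q where q: "q \<in> Q" "infdist v Q = dist v q"
    using infdist_attains_inf[OF compact_imp_closed[OF assms(1)] assms(2)] by blast
  have "bdd_above ((\<lambda>q. norm (H q)) ` Q)" "bdd_above ((\<lambda>q. inner (H q) (v - q)) ` Q)"
    using assms by (intro bounded_imp_bdd_above compact_imp_bounded compact_continuous_image
        continuous_intros; simp)+
  then have "norm (H q) \<le> (SUP q\<in>Q. norm (H q))" "inner (H q) (v - q) \<le> Gap v H Q"
    unfolding Gap_def using q(1) by (auto intro: cSUP_upper)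
  moreover have "- norm (H q) * norm (v - q) \<le> inner (H q) (v - q)"
    using Cauchy_Schwarz_ineq2[of "H q" "v - q"] by linarith
  ultimately show ?thesis
    using q(2) infdist_nonneg[of v Q] by (smt (verit) dist_norm mult_right_mono)
qed

lemma Gap_weighted_average_le:
  fixes H :: "'a::real_inner \<Rightarrow> 'a" and y :: "'b \<Rightarrow> 'a" and \<omega> :: "'b \<Rightarrow> real"
  assumes "Q \<noteq> {}" "0 < c" "c \<le> sum \<omega> A" "0 \<le> S"
    and bound: "\<And>z. z \<in> Q \<Longrightarrow> (\<Sum>j\<in>A. \<omega> j * inner (H z) (y j - z)) \<le> S"
  shows "Gap (inverse (sum \<omega> A) *\<^sub>R (\<Sum>j\<in>A. \<omega> j *\<^sub>R y j)) H Q \<le> S / c"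
  unfolding Gap_def
proof (rule cSUP_least[OF assms(1)])
  fix z assume "z \<in> Q"
  have "0 < sum \<omega> A" using assms(2,3) by linarith
  then have "inner (H z) (inverse (sum \<omega> A) *\<^sub>R (\<Sum>j\<in>A. \<omega> j *\<^sub>R y j) - z)
      = (\<Sum>j\<in>A. \<omega> j * inner (H z) (y j - z)) / sum \<omega> A"
    by (simp add: inner_diff_right inner_sum_right sum_subtractf sum_distrib_right field_simps)
  also have "\<dots> \<le> S / sum \<omega> A"
    using bound[OF \<open>z \<in> Q\<close>] \<open>0 < sum \<omega> A\<close> by (simp add: divide_right_mono)
  also have "\<dots> \<le> S / c"
    using assms(2-4) by (simp add: divide_left_mono)
  finally show "inner (H z) (inverse (sum \<omega> A) *\<^sub>R (\<Sum>j\<in>A. \<omega> j *\<^sub>R y j) - z) \<le> S / c" .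
qed

lemma weighted_sum_inverse_prod_ge:
  fixes lam \<beta> :: "nat \<Rightarrow> real"
  assumes "\<And>k. lo \<le> lam k" "0 < lo" "0 < \<eta>" "\<And>i. b \<le> \<beta> i" "\<And>i. \<beta> i < 1" "0 < k"
  shows "lo * \<eta> / (1 - b) ^ k \<le> (\<Sum>j<k. lam j * \<eta> * inverse (\<Prod>i\<le>j. 1 - \<beta> i))"
proof -
  have lam_nonneg: "0 \<le> lam j" for j
    using assms(1)[of j] assms(2) by linarith
  have "0 < (\<Prod>i\<le>k - 1. 1 - \<beta> i)"
    using assms(5) by (simp add: prod_pos)
  moreover have "(\<Prod>i\<le>k - 1. 1 - \<beta> i) \<le> (\<Prod>i\<le>k - 1. 1 - b)"
    using assms(4,5) by (intro prod_mono) (auto simp: less_imp_le)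
  ultimately have "inverse ((1 - b) ^ k) \<le> inverse (\<Prod>i\<le>k - 1. 1 - \<beta> i)"
    using \<open>0 < k\<close> by (intro le_imp_inverse_le) auto
  moreover have "b < 1"
    using assms(4,5) by (meson le_less_trans)
  ultimately have "lo * \<eta> * inverse ((1 - b) ^ k) \<le> lam (k - 1) * \<eta> * inverse (\<Prod>i\<le>k - 1. 1 - \<beta> i)"
    using assms(1-3) lam_nonneg by (intro mult_mono mult_right_mono) auto
  then have "lo * \<eta> / (1 - b) ^ k \<le> lam (k - 1) * \<eta> * inverse (\<Prod>i\<le>k - 1. 1 - \<beta> i)"
    by (simp add: divide_inverse)
  also have "\<dots> \<le> (\<Sum>j<k. lam j * \<eta> * inverse (\<Prod>i\<le>j. 1 - \<beta> i))"
    using assms lam_nonneg \<open>0 < k\<close>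
    by (intro member_le_sum) (auto intro!: mult_nonneg_nonneg prod_nonneg simp: less_imp_le)
  finally show ?thesis .
qed

theorem proposition4p10:
  fixes F H :: "'a::euclidean_space \<Rightarrow> 'a"
    and DomF DomH X \<Omega> :: "'a set"
    and LF LH \<mu> \<eta> lam_lo lam_hi :: real
    and \<alpha> lam \<beta> :: "nat \<Rightarrow> real"
    and x w w' y :: "nat \<Rightarrow> 'a"
  assumes F_mono: "monotone_op F DomF" and F_lip: "LF-lipschitz_on DomF F" and LF_pos: "LF > 0"
    and H_mono: "monotone_op H DomH" and H_lip: "LH-lipschitz_on DomH H" and LH_pos: "LH > 0"
    and H_strong: "strongly_monotone_op \<mu> H DomH" and mu_pos: "\<mu> > 0"
    and X_ne: "X \<noteq> {}" and X_compact: "compact X" and X_convex: "convex X"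
    and Om_ne: "\<Omega> \<noteq> {}" and Om_closed: "closed \<Omega>" and Om_convex: "convex \<Omega>"
    and X_sub: "X \<subseteq> \<Omega>" and Om_sub: "\<Omega> \<subseteq> DomF \<inter> DomH"
    and Q_ne: "VI_sol F X \<noteq> {}"
    and eta_pos: "\<eta> > 0"
    and lam_bounds: "\<And>k. lam_lo \<le> lam k \<and> lam k \<le> lam_hi"
    and lam_lo_pos: "0 < lam_lo" and lam_lo_le: "lam_lo \<le> lam_hi"
    and lam_hi_lt: "lam_hi < 1 / (LF + \<eta> * LH)"
    and alpha_nonneg: "\<And>k. \<alpha> k \<ge> 0"
    and alpha0: "\<alpha> 0 \<le> 1"
    and beta_def: "\<And>k. \<beta> k = inverse (1 / (1 - (lam k)\<^sup>2 * (LF + \<eta> * LH)\<^sup>2)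
                                       + 1 / (2 * lam k * \<eta> * \<mu>))"
    and alpha_dec: "\<And>k. \<alpha> (Suc k) \<le> (1 - \<beta> k) * \<alpha> k"
    and x0: "x 0 \<in> X"
    and w_def: "\<And>k. w k = x k + \<alpha> k *\<^sub>R (x k - x (k - 1))"
    and w'_def: "\<And>k. w' k = closest_point \<Omega> (w k)"
    and y_def: "\<And>k. y k = closest_point X (w k - lam k *\<^sub>R (F (w' k) + \<eta> *\<^sub>R H (w' k)))"
    and x_step: "\<And>k. x (Suc k) = closest_point X (w k - lam k *\<^sub>R (F (y k) + \<eta> *\<^sub>R H (y k)))"
  shows
    "let L = LF + \<eta> * LH;
         Q = VI_sol F X;
         BH = (SUP q\<in>Q. norm (H q));
         DX = diameter X;
         \<delta> = (\<lambda>k. \<alpha> k * (1 + \<alpha> k) * (norm (x k - x (k - 1)))\<^sup>2);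
         p = (\<lambda>k. inverse (\<Prod>i\<le>k. (1 - \<beta> i)));
         pm1 = (\<lambda>j. inverse (\<Prod>i<j. (1 - \<beta> i)));
         Lam = (\<lambda>k. \<Sum>j<k. lam j * \<eta> * p j);
         ybar = (\<lambda>k. inverse (Lam k) *\<^sub>R (\<Sum>j<k. (lam j * \<eta> * p j) *\<^sub>R y j));
         b = inverse (1 / (1 - lam_hi\<^sup>2 * L\<^sup>2) + 1 / (2 * lam_lo * \<eta> * \<mu>))
     in 0 < b \<and> b < 1 \<and>
        (\<forall>k\<ge>1. - BH * infdist (ybar k) Q \<le> Gap (ybar k) H Q \<and>
                 Gap (ybar k) H Q \<le> (1 - b) ^ k / (2 * lam_lo * \<eta>)
                                     * (DX\<^sup>2 + (\<Sum>j<k. pm1 j * \<delta> j)))"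
proof -
  define L where "L = LF + \<eta> * LH"
  define Q where "Q = VI_sol F X"
  define p where "p k = inverse (\<Prod>i\<le>k. 1 - \<beta> i)" for k
  define Lam where "Lam k = (\<Sum>j<k. lam j * \<eta> * p j)" for k
  define ybar where "ybar k = inverse (Lam k) *\<^sub>R (\<Sum>j<k. (lam j * \<eta> * p j) *\<^sub>R y j)" for k
  define S where "S k = (diameter X)\<^sup>2
    + (\<Sum>j<k. inverse (\<Prod>i<j. 1 - \<beta> i) * (\<alpha> j * (1 + \<alpha> j) * (norm (x j - x (j - 1)))\<^sup>2))" for k
  define b where "b = inverse (1 / (1 - lam_hi\<^sup>2 * L\<^sup>2) + 1 / (2 * lam_lo * \<eta> * \<mu>))"
  have "0 < L"
    unfolding L_def using LF_pos LH_pos eta_pos by (simp add: add_pos_pos)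
  have rates: "0 < b" "b < 1" "b \<le> \<beta> k" "\<beta> k < 1" "0 < lam k" "lam k * L < 1" for k
    using lam_bounds[of k] extragradient_rate_uniform_bounds[of lam_lo "lam k" lam_hi L \<eta> \<mu>]
      lam_lo_pos lam_hi_lt \<open>0 < L\<close> eta_pos mu_pos
    unfolding b_def beta_def[of k] L_def by auto
  note b_bounds = rates(1,2) and \<beta>_bounds = rates(3,4) and lam_pos = rates(5) and lam_L = rates(6)
  have "Q \<subseteq> X" "X \<subseteq> DomF" "X \<subseteq> DomH"
    unfolding Q_def VI_sol_def using X_sub Om_sub by auto
  then have "compact Q" "continuous_on Q H"
    unfolding Q_def
    using lipschitz_on_continuous_on[OF F_lip] lipschitz_on_continuous_on[OF H_lip]
    by (auto intro: compact_VI_sol X_compact continuous_on_subset)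
  have weighted_gap: "(\<Sum>j<k. (lam j * \<eta> * p j) * inner (H z) (y j - z)) \<le> S k / 2" if "z \<in> Q" for z k
    unfolding p_def S_def
    using IneIREG_weighted_gap_sum_le[OF F_mono F_lip H_strong H_lip X_compact X_convex X_ne
        Om_closed Om_convex X_sub Om_sub that[unfolded Q_def] eta_pos mu_pos lam_pos lam_L[unfolded L_def]
        beta_def alpha_nonneg alpha0 alpha_dec x0 w_def w'_def y_def x_step] .
  have "- (SUP q\<in>Q. norm (H q)) * infdist (ybar k) Q \<le> Gap (ybar k) H Q
      \<and> Gap (ybar k) H Q \<le> (1 - b) ^ k / (2 * lam_lo * \<eta>) * S k" if "k \<ge> 1" for k
  proof
    show "- (SUP q\<in>Q. norm (H q)) * infdist (ybar k) Q \<le> Gap (ybar k) H Q"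
      using Gap_ge_neg_infdist[OF \<open>compact Q\<close> _ \<open>continuous_on Q H\<close>] Q_ne by (simp add: Q_def)
    have Lam_ge: "lam_lo * \<eta> / (1 - b) ^ k \<le> Lam k"
      unfolding Lam_def p_def
      using weighted_sum_inverse_prod_ge[OF _ lam_lo_pos eta_pos \<beta>_bounds] lam_bounds that by auto
    have lower_pos: "0 < lam_lo * \<eta> / (1 - b) ^ k"
      using lam_lo_pos eta_pos b_bounds by simp
    have "0 \<le> S k / 2"
      unfolding S_def using \<beta>_bounds(2) alpha_nonneg
      by (auto intro!: add_nonneg_nonneg sum_nonneg mult_nonneg_nonneg prod_nonneg simp: less_imp_le)
    have "Gap (ybar k) H Q \<le> S k / 2 / (lam_lo * \<eta> / (1 - b) ^ k)"
      unfolding ybar_def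
      using Gap_weighted_average_le[OF _ lower_pos _ \<open>0 \<le> S k / 2\<close> weighted_gap] Q_ne Lam_ge
      by (simp add: Q_def Lam_def)
    then show "Gap (ybar k) H Q \<le> (1 - b) ^ k / (2 * lam_lo * \<eta>) * S k"
      by (simp add: ac_simps)
  qed
  with b_bounds show ?thesis
    unfolding Let_def L_def[symmetric] Q_def[symmetric] b_def[symmetric] p_def[symmetric]
      Lam_def[symmetric] ybar_def[symmetric] S_def[symmetric]
    by blast
qed

end
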